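(* Let $G=(V,E)$ be a connected quartic graph which is Bakry-\'Emery curvature sharp at every vertex and in which every edge is contained in exactly one triangle. Then $G$ is isomorphic to the Cartesian product $K_3\times K_3$.
   Context: $\Delta f(x)=\sum_{y\sim x}(f(y)-f(x))$, $2\Gamma(f,g)=\Delta(fg)-f\Delta g-g\Delta f$, $2\Gamma_2(f,g)=\Delta\Gamma(f,g)-\Gamma(f,\Delta g)-\Gamma(g,\Delta f)$; $\mathcal K_\infty(x)$ is the supremum of $K$ with $\Gamma_2(f,f)(x)\ge K\Gamma(f,f)(x)$ for all $f:V\to\mathbb R$. A vertex $x$ of a $D$-regular graph is curvature sharp if $\mathcal K_\infty(x)=2+\#_\Delta(x)/D$, where $\#_\Delta(x)$ is the number of triangles containing $x$. *)

theory Defs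
  imports Complex_Main
begin

definition simple_graph :: "'a set \<Rightarrow> ('a \<Rightarrow> 'a \<Rightarrow> bool) \<Rightarrow> bool" where
  "simple_graph V adj \<longleftrightarrow>
     (\<forall>x y. adj x y \<longrightarrow> x \<in> V \<and> y \<in> V) \<and>
     (\<forall>x y. adj x y \<longrightarrow> adj y x) \<and>
     (\<forall>x. \<not> adj x x)"

definition nbrs :: "'a set \<Rightarrow> ('a \<Rightarrow> 'a \<Rightarrow> bool) \<Rightarrow> 'a \<Rightarrow> 'a set" where
  "nbrs V adj x = {y \<in> V. adj x y}"

definition regular :: "'a set \<Rightarrow> ('a \<Rightarrow> 'a \<Rightarrow> bool) \<Rightarrow> nat \<Rightarrow> bool" where
  "regular V adj D \<longleftrightarrow> (\<forall>x\<in>V. finite (nbrs V adj x) \<and> card (nbrs V adj x) = D)"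

definition connected_graph :: "'a set \<Rightarrow> ('a \<Rightarrow> 'a \<Rightarrow> bool) \<Rightarrow> bool" where
  "connected_graph V adj \<longleftrightarrow> V \<noteq> {} \<and>
     (\<forall>x\<in>V. \<forall>y\<in>V. (\<lambda>u v. u \<in> V \<and> v \<in> V \<and> adj u v)\<^sup>*\<^sup>* x y)"

definition lap :: "'a set \<Rightarrow> ('a \<Rightarrow> 'a \<Rightarrow> bool) \<Rightarrow> ('a \<Rightarrow> real) \<Rightarrow> 'a \<Rightarrow> real" where
  "lap V adj f x = (\<Sum>y\<in>nbrs V adj x. f y - f x)"

definition Gam :: "'a set \<Rightarrow> ('a \<Rightarrow> 'a \<Rightarrow> bool) \<Rightarrow> ('a \<Rightarrow> real) \<Rightarrow> ('a \<Rightarrow> real) \<Rightarrow> 'a \<Rightarrow> real" where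
  "Gam V adj f g x =
     (lap V adj (\<lambda>z. f z * g z) x - f x * lap V adj g x - g x * lap V adj f x) / 2"

definition Gam2 :: "'a set \<Rightarrow> ('a \<Rightarrow> 'a \<Rightarrow> bool) \<Rightarrow> ('a \<Rightarrow> real) \<Rightarrow> ('a \<Rightarrow> real) \<Rightarrow> 'a \<Rightarrow> real" where
  "Gam2 V adj f g x =
     (lap V adj (\<lambda>z. Gam V adj f g z) x - Gam V adj f (lap V adj g) x
       - Gam V adj g (lap V adj f) x) / 2"

definition K_inf :: "'a set \<Rightarrow> ('a \<Rightarrow> 'a \<Rightarrow> bool) \<Rightarrow> 'a \<Rightarrow> real" where
  "K_inf V adj x = Sup {K. \<forall>f. Gam2 V adj f f x \<ge> K * Gam V adj f f x}"

definition num_triangles :: "'a set \<Rightarrow> ('a \<Rightarrow> 'a \<Rightarrow> bool) \<Rightarrow> 'a \<Rightarrow> nat" where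
  "num_triangles V adj x =
     card {{y, z} | y z. y \<in> nbrs V adj x \<and> z \<in> nbrs V adj x \<and> adj y z}"

definition curvature_sharp :: "'a set \<Rightarrow> ('a \<Rightarrow> 'a \<Rightarrow> bool) \<Rightarrow> nat \<Rightarrow> 'a \<Rightarrow> bool" where
  "curvature_sharp V adj D x \<longleftrightarrow>
     K_inf V adj x = 2 + real (num_triangles V adj x) / real D"

definition edge_in_unique_triangle :: "'a set \<Rightarrow> ('a \<Rightarrow> 'a \<Rightarrow> bool) \<Rightarrow> bool" where
  "edge_in_unique_triangle V adj \<longleftrightarrow>
     (\<forall>x y. adj x y \<longrightarrow> card {z \<in> V. adj x z \<and> adj y z} = 1)"

definition K3K3_V :: "(nat \<times> nat) set" where
  "K3K3_V = {0..2} \<times> {0..2}"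

definition K3K3_adj :: "nat \<times> nat \<Rightarrow> nat \<times> nat \<Rightarrow> bool" where
  "K3K3_adj p q \<longleftrightarrow> (fst p = fst q \<and> snd p \<noteq> snd q) \<or> (snd p = snd q \<and> fst p \<noteq> fst q)"

definition graph_iso :: "'a set \<Rightarrow> ('a \<Rightarrow> 'a \<Rightarrow> bool) \<Rightarrow> 'b set \<Rightarrow> ('b \<Rightarrow> 'b \<Rightarrow> bool) \<Rightarrow> bool" where
  "graph_iso V adj W adj' \<longleftrightarrow>
     (\<exists>f. bij_betw f V W \<and> (\<forall>x\<in>V. \<forall>y\<in>V. adj x y \<longleftrightarrow> adj' (f x) (f y)))"

end

theory Submission
  imports Defs
begin

text \<open>If every edge lies in exactly one triangle, the neighbourhood of a vertex x of a quartic
graph consists of two disjoint edges a b and c d, so x lies in exactly two triangles and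
curvature sharpness says \<open>\<Gamma>\<^sub>2 \<ge> 5/2 \<Gamma>\<close> at x. Writing \<open>4 \<Gamma>\<^sub>2(f)(x)\<close> as a sum of squared second
differences \<open>f(z) - 2 f(y) + f(x)\<close> along paths x y z, the test function which is 0 at x, 1 on
a and b, -1 on c and d and 2 at a further neighbour z of a violates this inequality unless z
is adjacent to c or d. Hence the neighbours of a, b, c, d close up into nine vertices forming
the grid K3 \<times> K3, and connectedness leaves no room for further vertices.\<close>

lemma Gam_eq_sum:
  "Gam V adj f g x = (\<Sum>y\<in>nbrs V adj x. (f y - f x) * (g y - g x)) / 2"
proof -
  have "(\<Sum>y\<in>nbrs V adj x. (f y - f x) * (g y - g x)) =
        (\<Sum>y\<in>nbrs V adj x. (f y * g y - f x * g x) - f x * (g y - g x) - g x * (f y - f x))"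
    by (rule sum.cong) (auto simp: algebra_simps)
  also have "\<dots> = lap V adj (\<lambda>z. f z * g z) x - f x * lap V adj g x - g x * lap V adj f x"
    unfolding lap_def by (simp add: sum_subtractf sum_distrib_left right_diff_distrib)
  finally show ?thesis unfolding Gam_def by simp
qed

lemma Gam_self_eq: "2 * Gam V adj f f x = (\<Sum>y\<in>nbrs V adj x. (f y - f x)\<^sup>2)"
  unfolding Gam_eq_sum by (simp add: power2_eq_square)

lemma Gam_self_nonneg: "0 \<le> Gam V adj f f x"
  using Gam_self_eq[of V adj f x] sum_nonneg[of "nbrs V adj x" "\<lambda>y. (f y - f x)\<^sup>2"] by simp

lemma nbrs_eq_Int: "nbrs V adj x = V \<inter> Collect (adj x)"
  by (auto simp: nbrs_def)

lemma connected_graph_closed_eq: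
  assumes "connected_graph V adj" "B \<subseteq> V" "x \<in> B" "\<And>y. y \<in> B \<Longrightarrow> nbrs V adj y \<subseteq> B"
  shows "B = V"
proof
  show "V \<subseteq> B"
  proof
    fix w assume "w \<in> V"
    then have "(\<lambda>u v. u \<in> V \<and> v \<in> V \<and> adj u v)\<^sup>*\<^sup>* x w"
      using assms(1-3) unfolding connected_graph_def by blast
    then show "w \<in> B"
    proof (induction rule: rtranclp_induct)
      case base
      show ?case using assms(3) .
    next
      case (step y z)
      then have "z \<in> nbrs V adj y" unfolding nbrs_def by simp
      then show ?case using assms(4) step.IH by blast
    qed
  qed
qed (rule assms(2))

lemma graph_iso_if_bij_betw:
  assumes bij: "bij_betw g W V" and adj: "\<And>i j. i \<in> W \<Longrightarrow> j \<in> W \<Longrightarrow> adj (g i) (g j) \<longleftrightarrow> adj' i j"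
  shows "graph_iso V adj W adj'"
proof -
  have "adj y z \<longleftrightarrow> adj' (inv_into W g y) (inv_into W g z)" if "y \<in> V" "z \<in> V" for y z
    using adj[of "inv_into W g y" "inv_into W g z"] that bij
    by (auto simp: bij_betw_def f_inv_into_f inv_into_into)
  then show ?thesis unfolding graph_iso_def using bij_betw_inv_into[OF bij] by blast
qed

definition locally_surjective ::
    "('b \<Rightarrow> 'a) \<Rightarrow> 'b set \<Rightarrow> ('b \<Rightarrow> 'b \<Rightarrow> bool) \<Rightarrow> 'a set \<Rightarrow> ('a \<Rightarrow> 'a \<Rightarrow> bool) \<Rightarrow> bool" where
  "locally_surjective h W adj' V adj \<longleftrightarrow>
     (\<forall>i\<in>W. h i \<in> V \<and> nbrs V adj (h i) = h ` nbrs W adj' i)"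

lemma K3K3_V_eq: "K3K3_V = {(0,0), (0,1), (0,2), (1,0), (1,1), (1,2), (2,0), (2,1), (2,2)}"
proof -
  have "{0..2::nat} = {0, 1, 2}" by auto
  then show ?thesis unfolding K3K3_V_def by auto
qed

lemma nbrs_K3K3:
  "nbrs K3K3_V K3K3_adj (0,0) = {(0,1), (0,2), (1,0), (2,0)}"
  "nbrs K3K3_V K3K3_adj (0,1) = {(0,0), (0,2), (1,1), (2,1)}"
  "nbrs K3K3_V K3K3_adj (0,2) = {(0,0), (0,1), (1,2), (2,2)}"
  "nbrs K3K3_V K3K3_adj (1,0) = {(0,0), (1,1), (1,2), (2,0)}"
  "nbrs K3K3_V K3K3_adj (1,1) = {(0,1), (1,0), (1,2), (2,1)}"
  "nbrs K3K3_V K3K3_adj (1,2) = {(0,2), (1,0), (1,1), (2,2)}"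
  "nbrs K3K3_V K3K3_adj (2,0) = {(0,0), (1,0), (2,1), (2,2)}"
  "nbrs K3K3_V K3K3_adj (2,1) = {(0,1), (1,1), (2,0), (2,2)}"
  "nbrs K3K3_V K3K3_adj (2,2) = {(0,2), (1,2), (2,0), (2,1)}"
  by (simp_all only: nbrs_eq_Int K3K3_V_eq Int_insert_left Int_empty_left)
    (simp_all add: K3K3_adj_def)

lemma card_nbrs_K3K3:
  assumes "i \<in> K3K3_V"
  shows "card (nbrs K3K3_V K3K3_adj i) = 4"
proof -
  have "i \<in> {(0,0), (0,1), (0,2), (1,0), (1,1), (1,2), (2,0), (2,1), (2,2)}"
    using assms by (simp add: K3K3_V_eq)
  then show ?thesis by (elim insertE emptyE) (simp_all add: nbrs_K3K3[simplified])
qed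

lemma K3K3_common_nbr:
  assumes "i \<in> K3K3_V" "j \<in> K3K3_V" "i \<noteq> j" "\<not> K3K3_adj i j"
  shows "\<exists>k\<in>K3K3_V. i \<in> nbrs K3K3_V K3K3_adj k \<and> j \<in> nbrs K3K3_V K3K3_adj k"
proof (intro bexI conjI)
  show "(fst i, snd j) \<in> K3K3_V" using assms(1,2) by (auto simp: K3K3_V_def)
  show "i \<in> nbrs K3K3_V K3K3_adj (fst i, snd j)" "j \<in> nbrs K3K3_V K3K3_adj (fst i, snd j)"
    using assms by (auto simp: nbrs_def K3K3_adj_def prod_eq_iff)
qed

definition two_triangle_test :: "'a \<Rightarrow> 'a \<Rightarrow> 'a \<Rightarrow> 'a \<Rightarrow> 'a \<Rightarrow> 'a \<Rightarrow> 'a \<Rightarrow> real" where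
  "two_triangle_test x a b c d z v =
     (if v = x then 0 else if v \<in> {a, b} then 1 else if v \<in> {c, d} then -1
      else if v = z then 2 else 0)"

locale regular_graph =
  fixes V :: "'a set" and adj :: "'a \<Rightarrow> 'a \<Rightarrow> bool" and D :: nat
  assumes simple: "simple_graph V adj"
    and regular: "regular V adj D"
begin

abbreviation N :: "'a \<Rightarrow> 'a set" where "N \<equiv> nbrs V adj"

lemma adj_in_V: "adj x y \<Longrightarrow> x \<in> V \<and> y \<in> V"
  using simple unfolding simple_graph_def by blast

lemma adj_sym: "adj x y \<Longrightarrow> adj y x"
  using simple unfolding simple_graph_def by blast

lemma not_adj_self [simp]: "\<not> adj x x"
  using simple unfolding simple_graph_def by blast

lemma mem_nbrs_iff [simp]: "y \<in> N x \<longleftrightarrow> adj x y"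
  using adj_in_V unfolding nbrs_def by blast

lemma finite_nbrs [simp]: "finite (N x)"
proof (cases "x \<in> V")
  case True
  then show ?thesis using regular unfolding regular_def by blast
next
  case False
  then have "N x = {}" using adj_in_V by auto
  then show ?thesis by simp
qed

lemma card_nbrs: "x \<in> V \<Longrightarrow> card (N x) = D"
  using regular unfolding regular_def by blast

lemma Gam2_self_eq:
  assumes x: "x \<in> V"
  shows "4 * Gam2 V adj f f x = (\<Sum>y\<in>N x. \<Sum>z\<in>N y. (f z - 2 * f y + f x)\<^sup>2)
      - 2 * real D * (\<Sum>y\<in>N x. (f y - f x)\<^sup>2) + 2 * (\<Sum>y\<in>N x. f y - f x)\<^sup>2"
proof -
  define L where "L = lap V adj f"
  define A where "A y = (\<Sum>z\<in>N y. (f z - f y)\<^sup>2)" for y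
  define C where "C y = (\<Sum>z\<in>N y. (f z - 2 * f y + f x)\<^sup>2)" for y
  have L: "L y = (\<Sum>z\<in>N y. f z - f y)" for y
    unfolding L_def lap_def by simp
  have C: "C y = A y - 2 * (f y - f x) * L y + real D * (f y - f x)\<^sup>2" if "y \<in> N x" for y
  proof -
    have "C y = (\<Sum>z\<in>N y. (f z - f y)\<^sup>2 - 2 * (f y - f x) * (f z - f y) + (f y - f x)\<^sup>2)"
      unfolding C_def by (rule sum.cong) (auto simp: power2_eq_square algebra_simps)
    also have "\<dots> = A y - 2 * (f y - f x) * L y + real (card (N y)) * (f y - f x)\<^sup>2"
      unfolding A_def L by (simp add: sum_subtractf sum.distrib sum_distrib_left right_diff_distrib)
    finally show ?thesis
      using that card_nbrs adj_in_V by simp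
  qed
  have sum_C: "(\<Sum>y\<in>N x. C y) = (\<Sum>y\<in>N x. A y) - 2 * (\<Sum>y\<in>N x. (f y - f x) * L y)
      + real D * (\<Sum>y\<in>N x. (f y - f x)\<^sup>2)"
  proof -
    have "(\<Sum>y\<in>N x. C y) = (\<Sum>y\<in>N x. A y - 2 * ((f y - f x) * L y) + real D * (f y - f x)\<^sup>2)"
      by (rule sum.cong) (auto simp: C)
    then show ?thesis by (simp add: sum_subtractf sum.distrib sum_distrib_left)
  qed
  have lap_Gam: "2 * lap V adj (\<lambda>z. Gam V adj f f z) x = (\<Sum>y\<in>N x. A y) - real D * A x"
  proof -
    have "2 * lap V adj (\<lambda>z. Gam V adj f f z) x = (\<Sum>y\<in>N x. A y - A x)"
      unfolding lap_def sum_distrib_left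
      by (rule sum.cong) (auto simp: Gam_self_eq A_def right_diff_distrib)
    then show ?thesis using card_nbrs[OF x] by (simp add: sum_subtractf)
  qed
  have Gam_L: "2 * Gam V adj f L x = (\<Sum>y\<in>N x. (f y - f x) * L y) - L x * L x"
  proof -
    have "2 * Gam V adj f L x = (\<Sum>y\<in>N x. (f y - f x) * L y - L x * (f y - f x))"
      unfolding Gam_eq_sum by (simp, rule sum.cong) (auto simp: algebra_simps)
    also have "\<dots> = (\<Sum>y\<in>N x. (f y - f x) * L y) - L x * (\<Sum>y\<in>N x. f y - f x)"
      unfolding sum_distrib_left sum_subtractf[symmetric] by simp
    finally show ?thesis using L[of x] by simp
  qed
  have "4 * Gam2 V adj f f x = 2 * lap V adj (\<lambda>z. Gam V adj f f z) x - 2 * (2 * Gam V adj f L x)"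
    unfolding Gam2_def L_def Gam_eq_sum by (simp add: mult.commute)
  also have "\<dots> = (\<Sum>y\<in>N x. C y) - 2 * real D * (\<Sum>y\<in>N x. (f y - f x)\<^sup>2) + 2 * (L x)\<^sup>2"
    unfolding lap_Gam Gam_L sum_C by (simp add: A_def power2_eq_square algebra_simps)
  finally show ?thesis unfolding C_def L by simp
qed

lemma Gam2_self_ge:
  assumes x: "x \<in> V"
  shows "(2 - real D) * Gam V adj f f x \<le> Gam2 V adj f f x"
proof -
  have "(\<Sum>y\<in>N x. 4 * (f y - f x)\<^sup>2) \<le> (\<Sum>y\<in>N x. \<Sum>z\<in>N y. (f z - 2 * f y + f x)\<^sup>2)"
  proof (rule sum_mono)
    fix y assume "y \<in> N x"
    then have "x \<in> N y" using adj_sym by simp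
    then have "(f x - 2 * f y + f x)\<^sup>2 \<le> (\<Sum>z\<in>N y. (f z - 2 * f y + f x)\<^sup>2)"
      by (intro member_le_sum) auto
    then show "4 * (f y - f x)\<^sup>2 \<le> (\<Sum>z\<in>N y. (f z - 2 * f y + f x)\<^sup>2)"
      by (simp add: power2_eq_square algebra_simps)
  qed
  then have "4 * (\<Sum>y\<in>N x. (f y - f x)\<^sup>2) \<le> (\<Sum>y\<in>N x. \<Sum>z\<in>N y. (f z - 2 * f y + f x)\<^sup>2)"
    by (simp add: sum_distrib_left)
  moreover have "0 \<le> 2 * (\<Sum>y\<in>N x. f y - f x)\<^sup>2" by simp
  ultimately have "(4 - 2 * real D) * (\<Sum>y\<in>N x. (f y - f x)\<^sup>2) \<le> 4 * Gam2 V adj f f x"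
    unfolding Gam2_self_eq[OF x] left_diff_distrib by linarith
  then show ?thesis unfolding Gam_self_eq[symmetric] by (simp add: algebra_simps)
qed

lemma K_inf_Gam_le_Gam2:
  assumes x: "x \<in> V"
  shows "K_inf V adj x * Gam V adj f f x \<le> Gam2 V adj f f x"
proof (cases "Gam V adj f f x = 0")
  case True
  then show ?thesis using Gam2_self_ge[OF x, of f] by simp
next
  case False
  then have pos: "Gam V adj f f x > 0" using Gam_self_nonneg[of V adj f x] by linarith
  define S where "S = {K. \<forall>g. K * Gam V adj g g x \<le> Gam2 V adj g g x}"
  have "2 - real D \<in> S" unfolding S_def using Gam2_self_ge[OF x] by blast
  moreover have "k \<le> Gam2 V adj f f x / Gam V adj f f x" if "k \<in> S" for k
    using that pos unfolding S_def by (simp add: le_divide_eq)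
  ultimately have "Sup S \<le> Gam2 V adj f f x / Gam V adj f f x"
    by (intro cSup_least) auto
  then show ?thesis using pos unfolding K_inf_def S_def by (simp add: le_divide_eq)
qed

end

locale quartic_unique_triangle_graph = regular_graph V adj 4 for V adj +
  assumes unique_triangle: "edge_in_unique_triangle V adj"
begin

lemma common_nbr_unique:
  assumes "adj u v" "adj u w" "adj v w" "adj u w'" "adj v w'"
  shows "w = w'"
proof -
  have "card {z \<in> V. adj u z \<and> adj v z} = 1"
    using unique_triangle assms(1) unfolding edge_in_unique_triangle_def by blast
  then obtain z where z: "{z \<in> V. adj u z \<and> adj v z} = {z}" by (rule card_1_singletonE)
  have "w \<in> {z \<in> V. adj u z \<and> adj v z}" "w' \<in> {z \<in> V. adj u z \<and> adj v z}"
    using assms adj_in_V by auto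
  then show ?thesis using z by auto
qed

lemma obtain_common_nbr:
  assumes "adj u v"
  obtains w where "adj u w" "adj v w"
proof -
  have "card {z \<in> V. adj u z \<and> adj v z} = 1"
    using unique_triangle assms unfolding edge_in_unique_triangle_def by blast
  then obtain w where "{z \<in> V. adj u z \<and> adj v z} = {w}" by (rule card_1_singletonE)
  then show ?thesis using that by blast
qed

lemma nbrs_eq_four:
  assumes "adj u w1" "adj u w2" "adj u w3" "adj u w4" "distinct [w1, w2, w3, w4]"
  shows "N u = {w1, w2, w3, w4}"
proof -
  have "u \<in> V" using assms(1) adj_in_V by blast
  have "{w1, w2, w3, w4} \<subseteq> N u" using assms by simp
  moreover have "card {w1, w2, w3, w4} = card (N u)" using assms card_nbrs[OF \<open>u \<in> V\<close>] by simp
  ultimately show ?thesis by (intro card_subset_eq[symmetric]) auto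
qed

lemma nbrs_two_triangles:
  assumes N: "N u = {v1, v2, w1, w2}" and dist: "distinct [v1, v2, w1, w2]" and "adj v1 v2"
  shows "adj w1 w2" and "\<not> adj v1 w1" "\<not> adj v1 w2" "\<not> adj v2 w1" "\<not> adj v2 w2"
proof -
  have "{v1, v2, w1, w2} \<subseteq> N u" using N by simp
  then have u: "adj u v1" "adj u v2" "adj u w1" "adj u w2" by auto
  have v1: "\<not> adj v1 w" if "w \<in> {w1, w2}" for w
    using common_nbr_unique[OF u(1) u(2) \<open>adj v1 v2\<close>, of w] that u dist by auto
  have v2: "\<not> adj v2 w" if "w \<in> {w1, w2}" for w
    using common_nbr_unique[OF u(2) u(1) adj_sym[OF \<open>adj v1 v2\<close>], of w] that u dist by auto
  show "\<not> adj v1 w1" "\<not> adj v1 w2" "\<not> adj v2 w1" "\<not> adj v2 w2" using v1 v2 by auto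
  obtain w where "adj u w" "adj w1 w" using obtain_common_nbr[OF u(3)] by blast
  moreover from this have "w \<in> N u" "w \<noteq> w1" "w \<noteq> v1" "w \<noteq> v2"
    using v1 v2 adj_sym by auto
  ultimately show "adj w1 w2" using N by auto
qed

lemma obtain_nbrs_two_triangles:
  assumes "x \<in> V"
  obtains a b c d where "N x = {a, b, c, d}" "distinct [a, b, c, d]" "adj a b"
proof -
  have "N x \<noteq> {}" using card_nbrs[OF assms] by auto
  then obtain a where a: "a \<in> N x" by blast
  then obtain b where b: "b \<in> N x" and "adj a b" using obtain_common_nbr[of x a] by auto
  have "a \<noteq> b" using \<open>adj a b\<close> by auto
  then have "card (N x - {a, b}) = 2"
    using card_nbrs[OF assms] a b by (simp add: card_Diff_subset)
  then obtain c d where cd: "N x - {a, b} = {c, d}" "c \<noteq> d" by (auto simp: card_2_iff)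
  have "N x = {a, b, c, d}" using cd(1) a b by blast
  moreover have "distinct [a, b, c, d]" using cd \<open>a \<noteq> b\<close> by auto
  ultimately show ?thesis using that \<open>adj a b\<close> by blast
qed

lemma num_triangles_eq_2:
  assumes "x \<in> V"
  shows "num_triangles V adj x = 2"
proof -
  obtain a b c d where N: "N x = {a, b, c, d}" and dist: "distinct [a, b, c, d]" and "adj a b"
    using obtain_nbrs_two_triangles[OF assms] .
  note tri = nbrs_two_triangles[OF N dist \<open>adj a b\<close>]
  have "{{y, z} | y z. y \<in> N x \<and> z \<in> N x \<and> adj y z} = {{a, b}, {c, d}}"
  proof
    show "{{y, z} | y z. y \<in> N x \<and> z \<in> N x \<and> adj y z} \<subseteq> {{a, b}, {c, d}}"
      using N tri(2-5) by (auto simp: insert_commute dest: adj_sym)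
    show "{{a, b}, {c, d}} \<subseteq> {{y, z} | y z. y \<in> N x \<and> z \<in> N x \<and> adj y z}"
      using N tri(1) \<open>adj a b\<close> by blast
  qed
  moreover have "{a, b} \<noteq> {c, d}" using dist by (auto simp: doubleton_eq_iff)
  ultimately show ?thesis unfolding num_triangles_def by simp
qed

lemma curvature_sharp_Gam2_ge:
  assumes "x \<in> V" "curvature_sharp V adj 4 x"
  shows "5/2 * Gam V adj f f x \<le> Gam2 V adj f f x"
proof -
  have "K_inf V adj x = 5/2"
    using assms num_triangles_eq_2 unfolding curvature_sharp_def by simp
  with K_inf_Gam_le_Gam2[OF assms(1), of f] show ?thesis by simp
qed

lemma sum_second_diff_le:
  fixes f :: "'a \<Rightarrow> real"
  assumes "adj y x" "adj y y'" "x \<noteq> y'"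
    and f: "f x = 0" "f y = t" "f y' = t" "t\<^sup>2 = 1"
    and others: "\<And>z. z \<in> N y - {x, y'} \<Longrightarrow> f z = 0 \<or> f z = 2 * t"
  shows "(\<Sum>z\<in>N y. (f z - 2 * f y + f x)\<^sup>2) \<le> 13"
    and "(\<exists>z\<in>N y - {x, y'}. f z = 2 * t) \<Longrightarrow> (\<Sum>z\<in>N y. (f z - 2 * f y + f x)\<^sup>2) \<le> 9"
proof -
  define R where "R = N y - {x, y'}"
  define h where "h z = (f z - 2 * f y + f x)\<^sup>2" for z
  have "y \<in> V" using assms(1) adj_in_V by blast
  have card_R: "card R = 2"
    unfolding R_def using card_nbrs[OF \<open>y \<in> V\<close>] assms(1-3) by (simp add: card_Diff_subset)
  have h_R: "h z \<le> 4" if "z \<in> R" for z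
    using others[of z] that f unfolding R_def h_def by (auto simp: power2_eq_square algebra_simps)
  have "N y = insert x (insert y' R)" unfolding R_def using assms(1,2) adj_sym by auto
  moreover have "x \<notin> R" "y' \<notin> R" "finite R" unfolding R_def by auto
  ultimately have "(\<Sum>z\<in>N y. h z) = h x + h y' + (\<Sum>z\<in>R. h z)"
    using assms(3) by simp
  moreover have "h x = 4" "h y' = 1" using f unfolding h_def by (simp_all add: power2_eq_square)
  ultimately have sum_h: "(\<Sum>z\<in>N y. h z) = 5 + (\<Sum>z\<in>R. h z)" by simp
  have "(\<Sum>z\<in>R. h z) \<le> real (card R) * 4"
    using h_R by (intro sum_bounded_above) auto
  then show "(\<Sum>z\<in>N y. (f z - 2 * f y + f x)\<^sup>2) \<le> 13"
    using sum_h card_R unfolding h_def by simp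
  assume "\<exists>z\<in>N y - {x, y'}. f z = 2 * t"
  then obtain z0 where "z0 \<in> R" "f z0 = 2 * t" unfolding R_def by blast
  then have z0: "z0 \<in> R" "h z0 = 0" using f unfolding h_def by simp_all
  have "card (R - {z0}) = 1" using card_R z0 by simp
  then have "(\<Sum>z\<in>R - {z0}. h z) \<le> 4"
    using h_R sum_bounded_above[of "R - {z0}" h 4] by simp
  moreover have "(\<Sum>z\<in>R. h z) = h z0 + (\<Sum>z\<in>R - {z0}. h z)"
    using z0 unfolding R_def by (simp add: sum.remove)
  ultimately show "(\<Sum>z\<in>N y. (f z - 2 * f y + f x)\<^sup>2) \<le> 9"
    using sum_h z0 unfolding h_def by simp
qed

lemma Gam_two_triangle_test:
  assumes N: "N x = {a, b, c, d}" "distinct [a, b, c, d]"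
  shows "Gam V adj (two_triangle_test x a b c d z) (two_triangle_test x a b c d z) x = 2"
proof -
  have "x \<notin> N x" by simp
  then have "x \<notin> {a, b, c, d}" unfolding N(1) .
  then have "(\<Sum>y\<in>N x. (two_triangle_test x a b c d z y - two_triangle_test x a b c d z x)\<^sup>2) = 4"
    using N by (auto simp: two_triangle_test_def)
  then show ?thesis using Gam_self_eq[of V adj "two_triangle_test x a b c d z" x] by simp
qed

lemma Gam2_two_triangle_test_le:
  assumes N: "N x = {a, b, c, d}" "distinct [a, b, c, d]" "adj a b"
    and z: "adj a z" "z \<noteq> x" "z \<noteq> b" "\<not> adj c z" "\<not> adj d z"
  shows "Gam2 V adj (two_triangle_test x a b c d z) (two_triangle_test x a b c d z) x \<le> 4"
proof -
  define f where "f = two_triangle_test x a b c d z"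
  note tri = nbrs_two_triangles[OF N]
  have "{a, b, c, d} \<subseteq> N x" using N(1) by simp
  then have x_adj: "adj a x" "adj b x" "adj c x" "adj d x" using adj_sym by auto
  then have "x \<in> V" "x \<notin> {a, b, c, d}" using adj_in_V by auto
  have sym_nonadj: "\<not> adj c a" "\<not> adj c b" "\<not> adj d a" "\<not> adj d b"
    using tri(2-5) adj_sym by blast+
  have f: "f x = 0" "f a = 1" "f b = 1" "f c = -1" "f d = -1" "f z = 2"
    using N(2) \<open>x \<notin> {a, b, c, d}\<close> z tri(2,3) unfolding f_def two_triangle_test_def by auto
  have f_02: "f w = 0 \<or> f w = 2 * 1" if "w \<notin> {x, a, b, c, d}" for w
    using that unfolding f_def two_triangle_test_def by auto
  have f_0: "f w = 0 \<or> f w = 2 * -1" if "w \<notin> {x, a, b, c, d, z}" for w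
    using that unfolding f_def two_triangle_test_def by auto
  define C where "C y = (\<Sum>w\<in>N y. (f w - 2 * f y + f x)\<^sup>2)" for y
  have "C a \<le> 9"
    unfolding C_def
  proof (rule sum_second_diff_le(2)[of a x b f 1])
    show "\<exists>w\<in>N a - {x, b}. f w = 2 * 1" using z f by auto
    show "w \<in> N a - {x, b} \<Longrightarrow> f w = 0 \<or> f w = 2 * 1" for w
      using tri(2,3) by (intro f_02) auto
  qed (use x_adj f N(2,3) in auto)
  moreover have "C b \<le> 13"
    unfolding C_def
  proof (rule sum_second_diff_le(1)[of b x a f 1])
    show "w \<in> N b - {x, a} \<Longrightarrow> f w = 0 \<or> f w = 2 * 1" for w
      using tri(4,5) by (intro f_02) auto
  qed (use x_adj f N(2,3) adj_sym in auto)
  moreover have "C c \<le> 13"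
    unfolding C_def
  proof (rule sum_second_diff_le(1)[of c x d f "-1"])
    show "w \<in> N c - {x, d} \<Longrightarrow> f w = 0 \<or> f w = 2 * -1" for w
      using sym_nonadj(1,2) z(4) by (intro f_0) auto
  qed (use x_adj f N(2) tri(1) in auto)
  moreover have "C d \<le> 13"
    unfolding C_def
  proof (rule sum_second_diff_le(1)[of d x c f "-1"])
    show "w \<in> N d - {x, c} \<Longrightarrow> f w = 0 \<or> f w = 2 * -1" for w
      using sym_nonadj(3,4) z(5) by (intro f_0) auto
  qed (use x_adj f N(2) tri(1) adj_sym in auto)
  moreover have "(\<Sum>y\<in>N x. C y) = C a + C b + C c + C d"
    and "(\<Sum>y\<in>N x. (f y - f x)\<^sup>2) = 4" and "(\<Sum>y\<in>N x. f y - f x) = 0"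
    using N(1,2) f by simp_all
  moreover note Gam2_self_eq[OF \<open>x \<in> V\<close>, of f]
  ultimately show ?thesis unfolding C_def f_def by simp
qed

lemma nbr_outside_triangle_adj:
  assumes sharp: "\<And>f. 5/2 * Gam V adj f f x \<le> Gam2 V adj f f x"
    and N: "N x = {a, b, c, d}" "distinct [a, b, c, d]" "adj a b"
    and z: "adj a z" "z \<noteq> x" "z \<noteq> b"
  shows "adj z c \<or> adj z d"
proof (rule ccontr)
  assume "\<not> ?thesis"
  then have "\<not> adj c z" "\<not> adj d z" using adj_sym by blast+
  then have "Gam2 V adj (two_triangle_test x a b c d z) (two_triangle_test x a b c d z) x \<le> 4"
    using Gam2_two_triangle_test_le[OF N z] by blast
  then show False using sharp[of "two_triangle_test x a b c d z"] Gam_two_triangle_test[OF N(1,2)]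
    by simp
qed

lemma obtain_nbrs_of_nbr:
  assumes sharp: "\<And>f. 5/2 * Gam V adj f f x \<le> Gam2 V adj f f x"
    and N: "N x = {a, b, c, d}" "distinct [a, b, c, d]" "adj a b"
  obtains p q where "N a = {x, b, p, q}" "distinct [x, b, p, q]" "adj p c" "adj q d"
proof -
  have "{a, b, c, d} \<subseteq> N x" using N(1) by simp
  then have "adj x a" "adj x b" by auto
  then have "a \<in> V" "x \<noteq> b" using adj_in_V by auto
  have "x \<in> N a" "b \<in> N a" using \<open>adj x a\<close> N(3) adj_sym by auto
  then have "card (N a - {x, b}) = 2"
    using card_nbrs[OF \<open>a \<in> V\<close>] \<open>x \<noteq> b\<close> by (simp add: card_Diff_subset)
  then obtain p q where pq: "N a - {x, b} = {p, q}" "p \<noteq> q" by (auto simp: card_2_iff)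
  have Na: "N a = {x, b, p, q}" using pq(1) \<open>x \<in> N a\<close> \<open>b \<in> N a\<close> by blast
  have dist: "distinct [x, b, p, q]" using pq \<open>x \<noteq> b\<close> by auto
  have "adj p q" using nbrs_two_triangles(1)[OF Na dist \<open>adj x b\<close>] .
  have "{p, q} \<subseteq> N a" using pq(1) by blast
  then have "adj p a" "adj q a" using adj_sym by auto
  have cd: "adj w c \<or> adj w d" if "w \<in> {p, q}" for w
  proof -
    have "w \<in> N a - {x, b}" using that pq(1) by simp
    then show ?thesis using nbr_outside_triangle_adj[OF sharp N] by simp
  qed
  have not_both: "\<not> (adj p e \<and> adj q e)" if "e \<in> {c, d}" for e
    using common_nbr_unique[OF \<open>adj p q\<close> \<open>adj p a\<close> \<open>adj q a\<close>, of e] N(2) that by auto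
  show ?thesis
  proof (cases "adj p c")
    case True
    then have "adj q d" using not_both[of c] cd[of q] by simp
    with True show ?thesis using that[OF Na dist] by blast
  next
    case False
    then have "adj p d" using cd[of p] by simp
    then have "adj q c" using not_both[of d] cd[of q] by simp
    moreover have "N a = {x, b, q, p}" "distinct [x, b, q, p]" using Na dist by auto
    ultimately show ?thesis using that \<open>adj p d\<close> by blast
  qed
qed

lemma obtain_K3K3_nbrs:
  assumes "x \<in> V" and sharp: "\<And>f. 5/2 * Gam V adj f f x \<le> Gam2 V adj f f x"
  obtains a b c d p q r s where
    "N x = {a, b, c, d}" "N a = {x, b, p, q}" "N b = {x, a, r, s}"
    "N c = {x, p, r, d}" "N p = {a, c, r, q}" "N r = {b, c, p, s}"
    "N d = {x, c, q, s}" "N q = {a, p, d, s}" "N s = {b, r, d, q}"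
proof -
  obtain a b c d where Nx: "N x = {a, b, c, d}" and abcd: "distinct [a, b, c, d]" "adj a b"
    using obtain_nbrs_two_triangles[OF assms(1)] .
  note tri = nbrs_two_triangles[OF Nx abcd]
  have "N x = {b, a, c, d}" "distinct [b, a, c, d]" "adj b a" using Nx abcd adj_sym by auto
  obtain r s where Nb: "N b = {x, a, r, s}" and rs: "distinct [x, a, r, s]" "adj r c" "adj s d"
    using obtain_nbrs_of_nbr[OF sharp \<open>N x = {b, a, c, d}\<close> \<open>distinct [b, a, c, d]\<close> \<open>adj b a\<close>] .
  obtain p q where Na: "N a = {x, b, p, q}" and pq: "distinct [x, b, p, q]" "adj p c" "adj q d"
    using obtain_nbrs_of_nbr[OF sharp Nx abcd] .
  have "{a, b, c, d} \<subseteq> N x" "{x, b, p, q} \<subseteq> N a" "{x, a, r, s} \<subseteq> N b"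
    using Nx Na Nb by simp_all
  then have adj1: "adj x a" "adj x b" "adj x c" "adj x d" "adj a p" "adj a q" "adj b r" "adj b s"
    by auto
  have adj2: "adj p q" "adj r s"
    using nbrs_two_triangles(1)[OF Na pq(1)] nbrs_two_triangles(1)[OF Nb rs(1)] adj1 by auto
  have "w = x" if "adj a w" "adj b w" for w
    using common_nbr_unique[OF abcd(2) adj1(1,2)[THEN adj_sym]] that by blast
  then have pq_rs: "p \<noteq> r" "p \<noteq> s" "q \<noteq> r" "q \<noteq> s" using adj1 pq(1) by auto
  have outer_cd: "p \<noteq> c" "p \<noteq> d" "q \<noteq> c" "q \<noteq> d" "r \<noteq> c" "r \<noteq> d" "s \<noteq> c" "s \<noteq> d"
    using adj1 tri(2-5) by auto
  note edges = adj1 adj2 abcd(2) tri(1) pq(2,3) rs(2,3)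
  note distinctness = pq(1) rs(1) pq_rs outer_cd tri(2-5)
  have Nc: "N c = {x, p, r, d}"
    by (rule nbrs_eq_four) (use edges edges[THEN adj_sym] distinctness in auto)
  have Nd: "N d = {x, c, q, s}"
    by (rule nbrs_eq_four) (use edges edges[THEN adj_sym] distinctness in auto)
  have "N c = {x, d, p, r}" using Nc by auto
  moreover have "distinct [x, d, p, r]" "distinct [x, c, q, s]" using edges distinctness by auto
  ultimately have adj3: "adj p r" "adj q s"
    using nbrs_two_triangles(1)[of c x d p r] nbrs_two_triangles(1)[OF Nd _ adj1(3)] adj1(4) by blast+
  have Np: "N p = {a, c, r, q}"
    by (rule nbrs_eq_four) (use edges edges[THEN adj_sym] adj3 adj3[THEN adj_sym] distinctness in auto)
  have Nq: "N q = {a, p, d, s}"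
    by (rule nbrs_eq_four) (use edges edges[THEN adj_sym] adj3 adj3[THEN adj_sym] distinctness in auto)
  have Nr: "N r = {b, c, p, s}"
    by (rule nbrs_eq_four) (use edges edges[THEN adj_sym] adj3 adj3[THEN adj_sym] distinctness in auto)
  have Ns: "N s = {b, r, d, q}"
    by (rule nbrs_eq_four) (use edges edges[THEN adj_sym] adj3 adj3[THEN adj_sym] distinctness in auto)
  show ?thesis using that Nx Na Nb Nc Np Nr Nd Nq Ns by blast
qed

lemma obtain_locally_surjective_K3K3:
  assumes "x \<in> V" and sharp: "\<And>f. 5/2 * Gam V adj f f x \<le> Gam2 V adj f f x"
  obtains v where "locally_surjective v K3K3_V K3K3_adj V adj"
proof -
  obtain a b c d p q r s where nbrs:
    "N x = {a, b, c, d}" "N a = {x, b, p, q}" "N b = {x, a, r, s}"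
    "N c = {x, p, r, d}" "N p = {a, c, r, q}" "N r = {b, c, p, s}"
    "N d = {x, c, q, s}" "N q = {a, p, d, s}" "N s = {b, r, d, q}"
    using obtain_K3K3_nbrs[OF assms] .
  define v where "v = (\<lambda>(i, j). [[x, a, b], [c, p, r], [d, q, s]] ! i ! j)"
  have "N x \<union> N a \<union> N b \<subseteq> V" unfolding nbrs_def by blast
  then have "{x, a, b, c, d, p, q, r, s} \<subseteq> V" using nbrs(1-3) \<open>x \<in> V\<close> by auto
  have "v i \<in> V \<and> N (v i) = v ` nbrs K3K3_V K3K3_adj i" if "i \<in> K3K3_V" for i
  proof -
    from that have "i \<in> {(0,0), (0,1), (0,2), (1,0), (1,1), (1,2), (2,0), (2,1), (2,2)}"
      by (simp add: K3K3_V_eq)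
    then show ?thesis using \<open>{x, a, b, c, d, p, q, r, s} \<subseteq> V\<close> by (elim insertE emptyE)
      (simp_all add: v_def nbrs_K3K3[simplified] nbrs)
  qed
  then show ?thesis using that unfolding locally_surjective_def by blast
qed

lemma graph_iso_K3K3_if_locally_surjective:
  assumes "connected_graph V adj" and "locally_surjective v K3K3_V K3K3_adj V adj"
  shows "graph_iso V adj K3K3_V K3K3_adj"
proof -
  have v: "\<forall>i\<in>K3K3_V. v i \<in> V \<and> N (v i) = v ` nbrs K3K3_V K3K3_adj i"
    using assms(2) unfolding locally_surjective_def .
  let ?NK = "nbrs K3K3_V K3K3_adj"
  have "finite K3K3_V" by (simp add: K3K3_V_def)
  have inj_nbrs: "inj_on v (?NK k)" if "k \<in> K3K3_V" for k
  proof (rule eq_card_imp_inj_on)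
    show "finite (?NK k)" using \<open>finite K3K3_V\<close> unfolding nbrs_def by simp
    show "card (v ` ?NK k) = card (?NK k)"
      using v that card_nbrs card_nbrs_K3K3 by metis
  qed
  have inj: "inj_on v K3K3_V"
  proof (rule inj_onI, rule ccontr)
    fix i j assume ij: "i \<in> K3K3_V" "j \<in> K3K3_V" "v i = v j" "i \<noteq> j"
    show False
    proof (cases "K3K3_adj i j")
      case True
      then have "v j \<in> N (v i)" using v ij(1,2) unfolding nbrs_def by auto
      then show False using ij(3) by simp
    next
      case False
      then obtain k where "k \<in> K3K3_V" "i \<in> ?NK k" "j \<in> ?NK k"
        using K3K3_common_nbr ij by blast
      then show False using inj_onD[OF inj_nbrs[OF \<open>k \<in> K3K3_V\<close>] ij(3)] ij(4) by blast
    qed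
  qed
  have "v ` K3K3_V = V"
  proof (rule connected_graph_closed_eq[OF assms(1)])
    show "v ` K3K3_V \<subseteq> V" using v by auto
    show "v (0,0) \<in> v ` K3K3_V" by (simp add: K3K3_V_def)
    show "N y \<subseteq> v ` K3K3_V" if "y \<in> v ` K3K3_V" for y
      using that v unfolding nbrs_def by auto
  qed
  with inj have "bij_betw v K3K3_V V" by (simp add: bij_betw_def)
  moreover have "adj (v i) (v j) \<longleftrightarrow> K3K3_adj i j" if "i \<in> K3K3_V" "j \<in> K3K3_V" for i j
  proof -
    have "adj (v i) (v j) \<longleftrightarrow> v j \<in> N (v i)" by simp
    also have "\<dots> \<longleftrightarrow> v j \<in> v ` ?NK i" using v that by simp
    also have "\<dots> \<longleftrightarrow> j \<in> ?NK i" using inj that by (intro inj_on_image_mem_iff) (auto simp: nbrs_def)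
    also have "\<dots> \<longleftrightarrow> K3K3_adj i j" using that unfolding nbrs_def by simp
    finally show ?thesis .
  qed
  ultimately show ?thesis by (rule graph_iso_if_bij_betw)
qed

end

theorem mainTheorem4:
  fixes V :: "'a set" and adj :: "'a \<Rightarrow> 'a \<Rightarrow> bool"
  assumes "simple_graph V adj"
    and "connected_graph V adj"
    and "regular V adj 4"
    and "\<forall>x\<in>V. curvature_sharp V adj 4 x"
    and "edge_in_unique_triangle V adj"
  shows "graph_iso V adj K3K3_V K3K3_adj"
proof -
  interpret quartic_unique_triangle_graph V adj
    using assms(1,3,5) by unfold_locales
  obtain x where x: "x \<in> V" using assms(2) unfolding connected_graph_def by blast
  then have "\<And>f. 5/2 * Gam V adj f f x \<le> Gam2 V adj f f x"
    using curvature_sharp_Gam2_ge assms(4) by blast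
  then obtain v where "locally_surjective v K3K3_V K3K3_adj V adj"
    using obtain_locally_surjective_K3K3[OF x] by blast
  then show ?thesis using graph_iso_K3K3_if_locally_surjective[OF assms(2)] by blast
qed

end
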